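(* Let $N,n,m,p,l$ be positive integers, $A\in\mathbb{R}^{n\times n}$, $B\in\mathbb{R}^{n\times p}$, $C\in\mathbb{R}^{m\times n}$, $H\in\mathbb{R}^{n\times m}$, $W=[w_{ij}]\in\mathbb{R}^{N\times N}$ with $w_{ii}=0$ for all $i$, $\Delta=\mathrm{diag}(\delta_1,\dots,\delta_N)$ with $\delta_i\in\{0,1\}$, and $h>0$. Put $\mathcal{B}(h)=\int_0^h e^{A\tau}d\tau\,B$, $\mathcal{H}(h)=\int_0^h e^{A\tau}d\tau\,HC$, $\Phi_s=I_N\otimes e^{Ah}+W\otimes\mathcal{H}(h)$, $\Psi_s=\Delta\otimes\mathcal{B}(h)$, $\tilde\Phi_s=\Phi_s^l$ and $\tilde\Psi_s=(\Phi_s^{l-1}+\Phi_s^{l-2}+\dots+\Phi_s+I)\Psi_s$. Suppose: (1) for every eigenvalue $\theta$ of $\Phi_s$, $\sum_{c=0}^{l-1}\theta^c\neq0$; (2) for every eigenvalue $\theta$ of $\Phi_s$ and every nonzero row vector $\eta\in\mathbb{C}^{1\times Nn}$ with $\eta\tilde\Phi_s=\theta^l\eta$, one has $\eta(\Delta\otimes\mathcal{B}(h))\neq0$. Then the discrete-time system $X(k+1)=\tilde\Phi_sX(k)+\tilde\Psi_sU(k)$ is controllable.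
   Context: This is the networked transmission multi-rate sampled-data system: transmission sampling period $h$, control sampling period $lh$, written as a discrete-time system with period $lh$. The discrete-time system is called controllable if every initial state can be steered to the origin in finitely many steps. $\otimes$ is the Kronecker product. *)

theory Defs
  imports "HOL-Analysis.Analysis"
begin

definition matpow :: "'a::comm_ring_1^'n^'n \<Rightarrow> nat \<Rightarrow> 'a^'n^'n" where
  "matpow M k = (((**) M) ^^ k) (mat 1)"

definition mexp :: "real^'n^'n \<Rightarrow> real^'n^'n" where
  "mexp M = (\<Sum>k. (1 / fact k) *\<^sub>R matpow M k)"

definition kron :: "'a::times^'j^'i \<Rightarrow> 'a^'l^'k \<Rightarrow> 'a^('j \<times> 'l)^('i \<times> 'k)" where
  "kron P Q = (\<chi> r c. P $ fst r $ fst c * Q $ snd r $ snd c)"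

definition cmat :: "real^'j^'i \<Rightarrow> complex^'j^'i" where
  "cmat M = (\<chi> i j. complex_of_real (M $ i $ j))"

definition is_eigenvalue :: "real^'n^'n \<Rightarrow> complex \<Rightarrow> bool" where
  "is_eigenvalue M \<theta> \<longleftrightarrow> (\<exists>v::complex^'n. v \<noteq> 0 \<and> cmat M *v v = \<theta> *s v)"

fun traj :: "real^'n^'n \<Rightarrow> real^'p^'n \<Rightarrow> real^'n \<Rightarrow> (nat \<Rightarrow> real^'p) \<Rightarrow> nat \<Rightarrow> real^'n" where
  "traj F G x0 U 0 = x0"
| "traj F G x0 U (Suc k) = F *v traj F G x0 U k + G *v U k"

definition controllable :: "real^'n^'n \<Rightarrow> real^'p^'n \<Rightarrow> bool" where
  "controllable F G \<longleftrightarrow> (\<forall>x0. \<exists>K U. traj F G x0 U K = 0)"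

end

theory Submission
  imports Defs "HOL-Computational_Algebra.Fundamental_Theorem_Algebra"
begin

text \<open>By the Popov-Belevitch-Hautus test, (F, G) is controllable as soon as no complex left
eigenvector of F is annihilated by G; its proof rests on the fact that every nonzero subspace
invariant under a complex matrix contains an eigenvector. For F = \<Phi>^l and G = S \<Psi> with
S = \<Sum>c<l. \<Phi>^c, let \<xi> \<noteq> 0 with \<xi> F = \<mu> \<xi>. Since S and F commute with \<Phi>, the left kernel of S
and the eigenspace of F for \<mu> are \<Phi>-invariant. The first contains no eigenvector of \<Phi>
by condition (1), so \<eta> = \<xi> S is nonzero; the second contains an eigenvector of \<Phi>, with
eigenvalue \<theta> say, so \<mu> = \<theta>^l. As \<eta> F = \<mu> \<eta>, condition (2) gives
\<xi> G = \<eta> \<Psi> \<noteq> 0.\<close>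

lemma matpow_0 [simp]: "matpow M 0 = mat 1"
  by (simp add: matpow_def)

lemma matpow_Suc: "matpow M (Suc k) = M ** matpow M k"
  by (simp add: matpow_def)

lemma matpow_1 [simp]: "matpow M 1 = M"
  by (simp add: matpow_Suc)

lemma matpow_add: "matpow M (a + b) = matpow M a ** matpow M b"
  by (induct a) (simp_all add: matpow_Suc matrix_mul_assoc)

lemma matpow_Suc': "matpow M (Suc k) = matpow M k ** M"
  using matpow_add[of M k 1] by (simp add: matpow_Suc)

lemma matpow_commute: "matpow M a ** matpow M b = matpow M b ** matpow M a"
  by (metis matpow_add add.commute)

lemma matrix_mul_sum_left: "A ** sum f S = (\<Sum>i\<in>S. A ** f i)"
  for A :: "'a::comm_ring_1^'k^'m"
  by (induct S rule: infinite_finite_induct) (simp_all add: matrix_add_ldistrib)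

lemma matrix_add_rdistrib: "(B + C) ** A = B ** A + C ** A"
  for A :: "'a::comm_ring_1^'k^'m"
  by (simp add: matrix_matrix_mult_def vec_eq_iff sum.distrib[symmetric] distrib_right)

lemma matrix_mul_sum_right: "sum f S ** A = (\<Sum>i\<in>S. f i ** A)"
  for A :: "'a::comm_ring_1^'k^'m"
  by (induct S rule: infinite_finite_induct) (simp_all add: matrix_add_rdistrib)

lemma sum_matpow_commute:
  "(\<Sum>c\<in>C. matpow M c) ** matpow M k = matpow M k ** (\<Sum>c\<in>C. matpow M c)"
  by (simp add: matrix_mul_sum_left matrix_mul_sum_right matpow_commute)

lemma vector_matrix_mul_sum: "x v* sum f S = (\<Sum>i\<in>S. x v* f i)"
  by (induct S rule: infinite_finite_induct) (simp_all add: vector_matrix_mult_add_rdistrib)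

lemma vector_matrix_mul_mat: "x v* mat c = c *s x"
  for c :: "'a::comm_ring_1"
  by (simp add: vector_matrix_mult_def mat_def vec_eq_iff if_distrib if_distribR sum.delta'
      cong: if_cong)

lemma scalar_vector_matrix_assoc_ring: "(k *s x) v* A = k *s (x v* A)"
  for k :: "'a::comm_semiring_1"
  by (simp add: vector_matrix_mult_def vec_eq_iff sum_distrib_left mult_ac)

lemma matrix_vector_mul_mat: "mat c *v x = c *s x"
  for c :: "'a::comm_ring_1"
  by (simp add: matrix_vector_mult_def mat_def vec_eq_iff if_distrib if_distribR sum.delta'
      cong: if_cong)

lemma left_eigenvector_matpow:
  "x v* M = \<theta> *s x \<Longrightarrow> x v* matpow M k = \<theta> ^ k *s x"
  for \<theta> :: "'a::comm_ring_1"
  by (induct k) (simp_all add: matpow_Suc' vector_matrix_mul_assoc[symmetric]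
      scalar_vector_matrix_assoc_ring mult.commute)

section \<open>Polynomials in a matrix acting on row vectors\<close>

text \<open>\<^term>\<open>vmult_poly x M p\<close> is the row vector x p(M), evaluated by Horner's scheme.\<close>

definition vmult_poly :: "'a::comm_ring_1^'k \<Rightarrow> 'a^'k^'k \<Rightarrow> 'a poly \<Rightarrow> 'a^'k" where
  "vmult_poly x M p = fold_coeffs (\<lambda>a f y. a *s y + f (y v* M)) p (\<lambda>_. 0) x"

lemma vmult_poly_0 [simp]: "vmult_poly x M 0 = 0"
  by (simp add: vmult_poly_def)

lemma vmult_poly_pCons [simp]:
  "vmult_poly x M (pCons a p) = a *s x + vmult_poly (x v* M) M p"
  by (cases "p = 0 \<and> a = 0") (auto simp: vmult_poly_def)

lemma vmult_poly_1 [simp]: "vmult_poly x M 1 = x"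
  by (simp add: one_pCons)

lemma vmult_poly_zero_vector [simp]: "vmult_poly 0 M p = 0"
  by (induct p) simp_all

lemma vmult_poly_add_vector:
  "vmult_poly (x + y) M p = vmult_poly x M p + vmult_poly y M p"
  by (induct p arbitrary: x y) (simp_all add: vector_matrix_left_distrib vector_add_ldistrib)

lemma vmult_poly_scale_vector:
  "vmult_poly (c *s x) M p = c *s vmult_poly x M p"
  by (induct p arbitrary: x) (simp_all add: scalar_vector_matrix_assoc_ring vector_add_ldistrib
      vector_smult_assoc mult.commute)

lemma vmult_poly_add: "vmult_poly x M (p + q) = vmult_poly x M p + vmult_poly x M q"
proof (induct p arbitrary: q x)
  case (pCons a p)
  then show ?case
    by (cases q) (simp add: vector_sadd_rdistrib)
qed simp

lemma vmult_poly_smult: "vmult_poly x M (smult c p) = c *s vmult_poly x M p"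
  by (induct p arbitrary: x) (simp_all add: vector_add_ldistrib vector_smult_assoc)

lemma vmult_poly_mult: "vmult_poly x M (p * q) = vmult_poly (vmult_poly x M p) M q"
  by (induct p arbitrary: x) (simp_all add: vmult_poly_add vmult_poly_smult
      vmult_poly_add_vector vmult_poly_scale_vector)

lemma vmult_poly_sum: "vmult_poly x M (sum p S) = (\<Sum>i\<in>S. vmult_poly x M (p i))"
  by (induct S rule: infinite_finite_induct) (simp_all add: vmult_poly_add)

lemma vmult_poly_monom: "vmult_poly x M (monom c n) = c *s (x v* matpow M n)"
  by (induct n arbitrary: x) (simp_all add: monom_0 monom_Suc matpow_Suc vector_matrix_mul_assoc)

lemma vmult_poly_linear: "vmult_poly x M [:-z, 1:] = x v* M - z *s x"
  by (simp add: vector_smult_lneg)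

lemma vmult_poly_annihilator_exists:
  fixes M :: "'a::field^'k^'k" and x :: "'a^'k"
  obtains p where "p \<noteq> 0" "vmult_poly x M p = 0"
proof -
  define K where "K = CARD('k)"
  define f where "f i = x v* matpow M i" for i
  show ?thesis
  proof (cases "inj_on f {..K}")
    case False
    then obtain i j where "i \<noteq> j" "f i = f j"
      unfolding inj_on_def by blast
    define p :: "'a poly" where "p = monom 1 i + monom (-1) j"
    have "coeff p i = 1"
      using \<open>i \<noteq> j\<close> by (simp add: p_def coeff_monom)
    moreover have "vmult_poly x M p = 0"
      using \<open>f i = f j\<close> by (simp add: p_def f_def vmult_poly_add vmult_poly_monom
          vector_smult_lneg)
    ultimately show ?thesis
      using that by (metis coeff_0 zero_neq_one)
  next
    case True
    define S where "S = f ` {..K}"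
    have "card S = Suc K"
      unfolding S_def using True by (simp add: card_image)
    moreover have "vec.dim S \<le> K"
      unfolding K_def by (rule dim_subset_UNIV_cart_gen)
    ultimately have "vec.dependent S"
      by (intro vec.dependent_biggerset_general) auto
    then obtain u where u: "\<exists>v\<in>S. u v \<noteq> 0" "(\<Sum>v\<in>S. u v *s v) = 0"
      using vec.dependent_finite[of S] unfolding S_def by blast
    define p :: "'a poly" where "p = (\<Sum>i\<le>K. monom (u (f i)) i)"
    have coeff_p: "coeff p i = (if i \<le> K then u (f i) else 0)" for i
      unfolding p_def by (simp add: coeff_sum coeff_monom)
    have "p \<noteq> 0"
      using u(1) coeff_p unfolding S_def by (metis atMost_iff coeff_0 imageE)
    moreover have "vmult_poly x M p = (\<Sum>v\<in>S. u v *s v)"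
      unfolding p_def S_def vmult_poly_sum vmult_poly_monom f_def[symmetric]
      using sum.reindex[OF True, of "\<lambda>v. u v *s v"] by simp
    ultimately show ?thesis
      using that u(2) by simp
  qed
qed

section \<open>Left eigenvectors\<close>

text \<open>Split an annihilating polynomial of x into linear factors and apply them one at a time:
the last nonzero vector obtained is an eigenvector.\<close>

lemma left_eigenvector_in_invariant_subspace:
  fixes M :: "complex^'k^'k"
  assumes V: "vec.subspace V" and invariant: "\<And>y. y \<in> V \<Longrightarrow> y v* M \<in> V"
    and "x \<in> V" "x \<noteq> 0"
  obtains \<xi> \<theta> where "\<xi> \<in> V" "\<xi> \<noteq> 0" "\<xi> v* M = \<theta> *s \<xi>"
proof (rule ccontr)
  assume "\<not> thesis"
  with that have no_eigenvector: "\<And>y \<theta>. y \<in> V \<Longrightarrow> y \<noteq> 0 \<Longrightarrow> y v* M \<noteq> \<theta> *s y"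
    by blast
  have "vmult_poly y M (\<Prod>z\<in>#A. [:-z, 1:]) \<noteq> 0" if "y \<in> V" "y \<noteq> 0" for A y
    using that
  proof (induct A arbitrary: y)
    case (add z A)
    have "y v* M - z *s y \<in> V"
      using add.prems(1) V invariant by (simp add: vec.subspace_diff vec.subspace_scale)
    moreover have "y v* M - z *s y \<noteq> 0"
      using add.prems no_eigenvector by auto
    ultimately have "vmult_poly (y v* M - z *s y) M (\<Prod>z\<in>#A. [:-z, 1:]) \<noteq> 0"
      using add.hyps by blast
    then show ?case
      unfolding image_mset_add_mset prod_mset.add_mset vmult_poly_mult vmult_poly_linear .
  qed simp
  moreover obtain p where "p \<noteq> 0" "vmult_poly x M p = 0"
    by (rule vmult_poly_annihilator_exists)
  ultimately show False
    using \<open>x \<in> V\<close> \<open>x \<noteq> 0\<close> complex_poly_decompose_multiset[of p]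
    by (metis leading_coeff_0_iff vector_mul_eq_0 vmult_poly_smult)
qed

lemma common_left_eigenvector:
  fixes P Q :: "complex^'k^'k"
  assumes commute: "Q ** P = P ** Q" and "x \<noteq> 0" "x v* Q = \<mu> *s x"
  obtains \<xi> \<theta> where "\<xi> \<noteq> 0" "\<xi> v* P = \<theta> *s \<xi>" "\<xi> v* Q = \<mu> *s \<xi>"
proof -
  define V where "V = {y. y v* Q = \<mu> *s y}"
  have "vec.subspace V"
    unfolding vec.subspace_def V_def
    by (simp add: vector_matrix_left_distrib scalar_vector_matrix_assoc vector_add_ldistrib
        vector_smult_assoc mult.commute)
  moreover have "y v* P \<in> V" if "y \<in> V" for y
    using that unfolding V_def
    by (simp add: vector_matrix_mul_assoc commute[symmetric])
      (metis vector_matrix_mul_assoc scalar_vector_matrix_assoc)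
  ultimately show ?thesis
    using left_eigenvector_in_invariant_subspace[of V P x] assms(2,3) that
    unfolding V_def by blast
qed

lemma is_eigenvalue_if_left_eigenvector:
  assumes "\<xi> \<noteq> 0" "\<xi> v* cmat M = \<theta> *s \<xi>"
  shows "is_eigenvalue M \<theta>"
proof (rule ccontr)
  assume "\<not> ?thesis"
  then have "(cmat M - mat \<theta>) *v v = 0 \<Longrightarrow> v = 0" for v
    by (auto simp: is_eigenvalue_def matrix_vector_mult_diff_rdistrib matrix_vector_mul_mat)
  then obtain B where "B ** (cmat M - mat \<theta>) = mat 1"
    using matrix_left_invertible_ker by blast
  then have "(cmat M - mat \<theta>) ** B = mat 1"
    using matrix_left_right_inverse by blast
  moreover have "\<xi> v* (cmat M - mat \<theta>) = 0"
    using assms(2) by (simp add: vector_matrix_mult_diff_rdistrib vector_matrix_mul_mat)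
  ultimately have "\<xi> = 0"
    by (metis vector_matrix_mul_assoc vector_matrix_mul_rid vector_matrix_mult_0)
  then show False
    using assms(1) by blast
qed

lemma cmat_mult: "cmat (A ** B) = cmat A ** cmat B"
  by (simp add: cmat_def matrix_matrix_mult_def vec_eq_iff)

lemma cmat_add: "cmat (A + B) = cmat A + cmat B"
  by (simp add: cmat_def vec_eq_iff)

lemma cmat_mat_1: "cmat (mat 1) = mat 1"
  by (simp add: cmat_def mat_def vec_eq_iff)

lemma cmat_sum: "cmat (sum f S) = (\<Sum>i\<in>S. cmat (f i))"
  by (induct S rule: infinite_finite_induct) (simp_all add: cmat_add cmat_def vec_eq_iff)

lemma cmat_matpow: "cmat (matpow M k) = matpow (cmat M) k"
  by (induct k) (simp_all add: cmat_mat_1 matpow_Suc cmat_mult)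

definition cvec :: "real^'k \<Rightarrow> complex^'k" where
  "cvec x = (\<chi> i. complex_of_real (x $ i))"

lemma cvec_vector_matrix_mult: "cvec x v* cmat A = cvec (x v* A)"
  by (simp add: cvec_def cmat_def vector_matrix_mult_def vec_eq_iff)

lemma cvec_eq_0_iff [simp]: "cvec x = 0 \<longleftrightarrow> x = 0"
  by (simp add: cvec_def vec_eq_iff)

section \<open>The Popov-Belevitch-Hautus test\<close>

lemma traj_zero_initial:
  "traj F G 0 U K = (\<Sum>i<K. matpow F (K - Suc i) *v (G *v U i))"
proof (induct K)
  case (Suc K)
  have "F *v (\<Sum>i<K. matpow F (K - Suc i) *v (G *v U i))
      = (\<Sum>i<K. matpow F (Suc K - Suc i) *v (G *v U i))"
  proof -
    have "F ** matpow F (K - Suc i) = matpow F (Suc K - Suc i)" if "i < K" for i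
      using that by (metis Suc_diff_Suc diff_Suc_Suc matpow_Suc)
    then show ?thesis
      by (auto simp: vec.sum matrix_vector_mul_assoc matrix_mul_assoc intro!: sum.cong)
  qed
  with Suc show ?case
    by simp
qed simp

lemma traj_decompose: "traj F G x0 U K = matpow F K *v x0 + traj F G 0 U K"
  by (induct K) (simp_all add: matpow_Suc matrix_vector_right_distrib matrix_vector_mul_assoc)

lemma traj_zero_add: "traj F G 0 (\<lambda>i. U i + V i) K = traj F G 0 U K + traj F G 0 V K"
  by (induct K) (simp_all add: matrix_vector_right_distrib)

lemma traj_zero_scaleR: "traj F G 0 (\<lambda>i. c *\<^sub>R U i) K = c *\<^sub>R traj F G 0 U K"
  by (induct K) (simp_all add: matrix_vector_mult_scaleR scaleR_add_right)

definition reachable :: "real^'n^'n \<Rightarrow> real^'p^'n \<Rightarrow> nat \<Rightarrow> (real^'n) set" where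
  "reachable F G K = range (\<lambda>U. traj F G 0 U K)"

lemma subspace_reachable: "subspace (reachable F G K)"
proof -
  have "traj F G 0 (\<lambda>_. 0) K = 0"
    by (induct K) simp_all
  then show ?thesis
    unfolding subspace_def reachable_def
    by (auto simp: traj_zero_add[symmetric] traj_zero_scaleR[symmetric] image_iff)
qed

lemma matpow_mult_in_reachable:
  assumes "j < K"
  shows "matpow F j *v (G *v u) \<in> reachable F G K"
proof -
  let ?U = "\<lambda>i. if i = K - Suc j then u else 0"
  have "traj F G 0 ?U K = (\<Sum>i<K. if i = K - Suc j then matpow F j *v (G *v u) else 0)"
    unfolding traj_zero_initial using assms by (intro sum.cong) auto
  also have "\<dots> = matpow F j *v (G *v u)"
    using assms by simp
  finally show ?thesis
    unfolding reachable_def by (metis rangeI)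
qed

lemma controllable_if_reachable_eq_UNIV:
  assumes "reachable F G K = UNIV"
  shows "controllable F G"
  unfolding controllable_def
proof
  fix x0
  obtain U where "traj F G 0 U K = - (matpow F K *v x0)"
    using assms unfolding reachable_def by (metis UNIV_I rangeE)
  then show "\<exists>K U. traj F G x0 U K = 0"
    using traj_decompose[of F G x0 U K] by auto
qed

lemma reachable_eq_UNIV_if_span_eq_UNIV:
  assumes "span {matpow F j *v (G *v u) | j u. True} = UNIV"
  obtains K where "reachable F G K = UNIV"
proof -
  let ?S = "{matpow F j *v (G *v u) | j u. True}"
  obtain B where B: "B \<subseteq> ?S" "independent B" "?S \<subseteq> span B"
    by (rule maximal_independent_subset)
  have "finite B"
    using B(2) by (rule independent_imp_finite)
  have "\<forall>b\<in>B. \<exists>j u. b = matpow F j *v (G *v u)"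
    using B(1) by blast
  then obtain j u where ju: "\<And>b. b \<in> B \<Longrightarrow> b = matpow F (j b) *v (G *v u b)"
    by metis
  define K where "K = Suc (Max (j ` B))"
  have "B \<subseteq> reachable F G K"
  proof
    fix b
    assume "b \<in> B"
    then have "j b < K"
      unfolding K_def using \<open>finite B\<close> by (simp add: le_imp_less_Suc)
    then show "b \<in> reachable F G K"
      using ju[OF \<open>b \<in> B\<close>] matpow_mult_in_reachable by metis
  qed
  then have "span B \<subseteq> reachable F G K"
    using subspace_reachable by (rule span_minimal)
  moreover have "span ?S \<subseteq> span B"
    using B(3) subspace_span by (rule span_minimal)
  ultimately have "UNIV \<subseteq> reachable F G K"
    using assms by blast
  then show ?thesis
    using that by blast
qed

lemma span_matpow_mult_eq_UNIV_if_PBH: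
  fixes F :: "real^'k^'k" and G :: "real^'r^'k"
  assumes PBH: "\<And>\<xi> \<mu>. \<xi> \<noteq> 0 \<Longrightarrow> \<xi> v* cmat F = \<mu> *s \<xi> \<Longrightarrow> \<xi> v* cmat G \<noteq> 0"
  shows "span {matpow F j *v (G *v u) | j u. True} = UNIV"
proof (rule ccontr)
  let ?S = "{matpow F j *v (G *v u) | j u. True}"
  assume "span ?S \<noteq> UNIV"
  then obtain w where "w \<noteq> 0" and w_orthogonal: "\<And>y. y \<in> span ?S \<Longrightarrow> orthogonal w y"
    using orthogonal_to_subspace_exists_gen[of ?S UNIV] by auto
  have w_annihilates: "w v* (matpow F j ** G) = 0" for j
  proof -
    let ?X = "matpow F j ** G"
    have "?X *v (w v* ?X) \<in> span ?S"
      by (rule span_base) (auto simp: matrix_vector_mul_assoc[symmetric])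
    then have "w \<bullet> (?X *v (w v* ?X)) = 0"
      using w_orthogonal orthogonal_def by blast
    then show ?thesis
      by (simp add: dot_lmul_matrix[symmetric])
  qed
  define V where "V = {\<eta>. \<forall>j. \<eta> v* cmat (matpow F j ** G) = 0}"
  have "vec.subspace V"
    unfolding vec.subspace_def V_def
    by (simp add: vector_matrix_left_distrib scalar_vector_matrix_assoc)
  moreover have "\<eta> v* cmat F \<in> V" if "\<eta> \<in> V" for \<eta>
  proof -
    have "(\<eta> v* cmat F) v* cmat (matpow F j ** G) = \<eta> v* cmat (matpow F (Suc j) ** G)" for j
      by (simp add: vector_matrix_mul_assoc cmat_mult[symmetric] matpow_Suc matrix_mul_assoc)
    then show ?thesis
      using that unfolding V_def by simp
  qed
  moreover have "cvec w \<in> V"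
    unfolding V_def by (simp add: cvec_vector_matrix_mult w_annihilates)
  moreover have "cvec w \<noteq> 0"
    using \<open>w \<noteq> 0\<close> by simp
  ultimately obtain \<xi> \<mu> where "\<xi> \<in> V" "\<xi> \<noteq> 0" "\<xi> v* cmat F = \<mu> *s \<xi>"
    by (rule left_eigenvector_in_invariant_subspace)
  moreover have "\<xi> v* cmat (matpow F 0 ** G) = 0"
    using \<open>\<xi> \<in> V\<close> unfolding V_def by blast
  then have "\<xi> v* cmat G = 0"
    by simp
  ultimately show False
    using PBH by blast
qed

theorem controllable_if_PBH:
  fixes F :: "real^'k^'k" and G :: "real^'r^'k"
  assumes "\<And>\<xi> \<mu>. \<xi> \<noteq> 0 \<Longrightarrow> \<xi> v* cmat F = \<mu> *s \<xi> \<Longrightarrow> \<xi> v* cmat G \<noteq> 0"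
  shows "controllable F G"
proof -
  have "span {matpow F j *v (G *v u) | j u. True} = UNIV"
    using assms by (rule span_matpow_mult_eq_UNIV_if_PBH)
  then obtain K where "reachable F G K = UNIV"
    by (rule reachable_eq_UNIV_if_span_eq_UNIV)
  then show ?thesis
    by (rule controllable_if_reachable_eq_UNIV)
qed

section \<open>Controllability of the lifted system\<close>

lemma vector_matrix_mult_sum_matpow_nonzero:
  fixes P :: "complex^'k^'k"
  assumes sum_powers_nonzero: "\<And>\<zeta> \<theta>. \<zeta> \<noteq> 0 \<Longrightarrow> \<zeta> v* P = \<theta> *s \<zeta> \<Longrightarrow> (\<Sum>c<l. \<theta> ^ c) \<noteq> 0"
    and "\<xi> \<noteq> 0"
  shows "\<xi> v* (\<Sum>c<l. matpow P c) \<noteq> 0"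
proof
  let ?S = "\<Sum>c<l. matpow P c"
  assume "\<xi> v* ?S = 0"
  moreover have "?S ** P = P ** ?S"
    by (metis matpow_1 sum_matpow_commute)
  ultimately obtain \<zeta> \<theta> where "\<zeta> \<noteq> 0" "\<zeta> v* P = \<theta> *s \<zeta>" "\<zeta> v* ?S = 0"
    using common_left_eigenvector[of ?S P \<xi> 0] \<open>\<xi> \<noteq> 0\<close> by auto
  moreover have "\<zeta> v* ?S = (\<Sum>c<l. \<theta> ^ c) *s \<zeta>"
    using left_eigenvector_matpow[OF \<open>\<zeta> v* P = \<theta> *s \<zeta>\<close>]
    by (simp add: vector_matrix_mul_sum vec.scale_sum_left)
  ultimately show False
    using sum_powers_nonzero by simp
qed

lemma left_eigenvalue_matpow_cases:
  fixes P :: "complex^'k^'k"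
  assumes "\<xi> \<noteq> 0" "\<xi> v* matpow P l = \<mu> *s \<xi>"
  obtains \<zeta> \<theta> where "\<zeta> \<noteq> 0" "\<zeta> v* P = \<theta> *s \<zeta>" "\<mu> = \<theta> ^ l"
proof -
  have "matpow P l ** P = P ** matpow P l"
    by (metis matpow_1 matpow_commute)
  then obtain \<zeta> \<theta> where "\<zeta> \<noteq> 0" "\<zeta> v* P = \<theta> *s \<zeta>" "\<zeta> v* matpow P l = \<mu> *s \<zeta>"
    using common_left_eigenvector assms by blast
  moreover from this have "\<mu> = \<theta> ^ l"
    by (metis left_eigenvector_matpow vec.scale_right_imp_eq)
  ultimately show ?thesis
    using that by blast
qed

theorem controllable_lifted_system:
  fixes Phi :: "real^'k^'k" and Psi :: "real^'r^'k"
  assumes sum_powers_nonzero: "\<And>\<theta>. is_eigenvalue Phi \<theta> \<Longrightarrow> (\<Sum>c<l. \<theta> ^ c) \<noteq> 0"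
    and PBH: "\<And>\<theta> \<eta>. is_eigenvalue Phi \<theta> \<Longrightarrow> \<eta> \<noteq> 0 \<Longrightarrow>
      \<eta> v* cmat (matpow Phi l) = \<theta> ^ l *s \<eta> \<Longrightarrow> \<eta> v* cmat Psi \<noteq> 0"
  shows "controllable (matpow Phi l) ((\<Sum>c<l. matpow Phi c) ** Psi)"
proof (rule controllable_if_PBH)
  define P where "P = cmat Phi"
  define S where "S = (\<Sum>c<l. matpow P c)"
  have eigenvalue: "is_eigenvalue Phi \<theta>" if "\<zeta> \<noteq> 0" "\<zeta> v* P = \<theta> *s \<zeta>" for \<zeta> \<theta>
    using that unfolding P_def by (rule is_eigenvalue_if_left_eigenvector)
  fix \<xi> \<mu>
  assume "\<xi> \<noteq> 0" and "\<xi> v* cmat (matpow Phi l) = \<mu> *s \<xi>"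
  then have \<xi>_eigen: "\<xi> v* matpow P l = \<mu> *s \<xi>"
    unfolding P_def by (simp add: cmat_matpow)
  define \<eta> where "\<eta> = \<xi> v* S"
  have "\<eta> \<noteq> 0"
    unfolding \<eta>_def S_def
    using vector_matrix_mult_sum_matpow_nonzero sum_powers_nonzero eigenvalue \<open>\<xi> \<noteq> 0\<close>
    by blast
  obtain \<zeta> \<theta> where "\<zeta> \<noteq> 0" "\<zeta> v* P = \<theta> *s \<zeta>" "\<mu> = \<theta> ^ l"
    using left_eigenvalue_matpow_cases \<open>\<xi> \<noteq> 0\<close> \<xi>_eigen by blast
  have "\<eta> v* matpow P l = (\<xi> v* matpow P l) v* S"
    unfolding \<eta>_def S_def by (simp add: vector_matrix_mul_assoc sum_matpow_commute)
  also have "\<dots> = \<theta> ^ l *s \<eta>"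
    by (simp add: \<xi>_eigen \<open>\<mu> = \<theta> ^ l\<close> \<eta>_def scalar_vector_matrix_assoc)
  finally have "\<eta> v* cmat Psi \<noteq> 0"
    using PBH eigenvalue \<open>\<eta> \<noteq> 0\<close> \<open>\<zeta> \<noteq> 0\<close> \<open>\<zeta> v* P = \<theta> *s \<zeta>\<close>
    unfolding P_def cmat_matpow by blast
  moreover have "cmat (\<Sum>c<l. matpow Phi c) = S"
    unfolding S_def P_def by (simp add: cmat_sum cmat_matpow)
  ultimately show "\<xi> v* cmat ((\<Sum>c<l. matpow Phi c) ** Psi) \<noteq> 0"
    by (simp add: cmat_mult \<eta>_def vector_matrix_mul_assoc)
qed

theorem corollary13:
  fixes A :: "real^'n^'n" and B :: "real^'p^'n" and C :: "real^'n^'m"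
    and H :: "real^'m^'n" and W :: "real^'N^'N" and Delta :: "real^'N^'N"
    and h :: real and l :: nat
  assumes l_pos: "l \<ge> 1"
    and h_pos: "h > 0"
    and W_diag: "\<forall>i. W $ i $ i = 0"
    and Delta_diag: "\<forall>i j. i \<noteq> j \<longrightarrow> Delta $ i $ j = 0"
    and Delta_01: "\<forall>i. Delta $ i $ i \<in> {0, 1}"
  defines "Bh \<equiv> integral {0..h} (\<lambda>\<tau>. mexp (\<tau> *\<^sub>R A)) ** B"
    and "Hh \<equiv> integral {0..h} (\<lambda>\<tau>. mexp (\<tau> *\<^sub>R A)) ** H ** C"
  defines "Phi \<equiv> kron (mat 1 :: real^'N^'N) (mexp (h *\<^sub>R A)) + kron W Hh"
    and "Psi \<equiv> kron Delta Bh"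
  defines "Phit \<equiv> matpow Phi l"
    and "Psit \<equiv> (\<Sum>c<l. matpow Phi c) ** Psi"
  assumes cond1: "\<forall>\<theta>. is_eigenvalue Phi \<theta> \<longrightarrow> (\<Sum>c<l. \<theta> ^ c) \<noteq> 0"
    and cond2: "\<forall>\<theta> (\<eta>::complex^('N \<times> 'n)). is_eigenvalue Phi \<theta> \<and> \<eta> \<noteq> 0
                  \<and> \<eta> v* cmat Phit = \<theta> ^ l *s \<eta> \<longrightarrow> \<eta> v* cmat (kron Delta Bh) \<noteq> 0"
  shows "controllable Phit Psit"
  unfolding Phit_def Psit_def
proof (rule controllable_lifted_system)
  show "\<And>\<theta>. is_eigenvalue Phi \<theta> \<Longrightarrow> (\<Sum>c<l. \<theta> ^ c) \<noteq> 0"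
    using cond1 by blast
  show "\<And>\<theta> \<eta>. is_eigenvalue Phi \<theta> \<Longrightarrow> \<eta> \<noteq> 0 \<Longrightarrow>
      \<eta> v* cmat (matpow Phi l) = \<theta> ^ l *s \<eta> \<Longrightarrow> \<eta> v* cmat Psi \<noteq> 0"
    using cond2 unfolding Phit_def Psi_def by blast
qed

end
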